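(* Let $\mathcal{G}$ be a hereditary and multiplicative graph family with $\mathcal{G}_n\ne\emptyset$ for all $n$, let $r\geq 2$ and $0\leq \alpha\leq 1-\frac{1}{r}$. Suppose that $\lambda_{\alpha}(\mathcal{G}_n)>\left(1-\frac{1}{r}\right)n-\left(1-\frac{1}{r}\right)$ for all sufficiently large $n$. Then for every $n\ge1$ and every $G\in \mathcal{G}_n$, $$\lambda_{\alpha}(G)\leq \pi_{\alpha}(\mathcal{G})\,n,$$ where $\pi_\alpha(\mathcal{G})=\lim_{n\to\infty}\lambda_\alpha(\mathcal{G}_n)/n$ (which exists under these hypotheses).
   Context: $\lambda_\alpha(G)$ is the largest eigenvalue of $A_\alpha(G)=\alpha D(G)+(1-\alpha)A(G)$ ($A$ adjacency matrix, $D$ diagonal degree matrix). $\mathcal{G}_n$ is the set of $n$-vertex graphs in $\mathcal{G}$ and $\lambda_\alpha(\mathcal{G}_n)=\max_{G\in\mathcal{G}_n}\lambda_\alpha(G)$. A family is hereditary if closed under taking induced subgraphs. The blow-up $G^p$ of $G$ replaces each vertex by $p$ independent vertices and each edge by a complete bipartite graph $K_{p,p}$; a family $\mathcal{G}$ is multiplicative if $G\in\mathcal{G}$ implies $G^p\in\mathcal{G}$ for all integers $p\ge1$. *)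

theory Defs
  imports Complex_Main
begin

type_synonym graph = "nat \<times> (nat \<Rightarrow> nat \<Rightarrow> bool)"

definition is_graph :: "graph \<Rightarrow> bool" where
  "is_graph G \<longleftrightarrow> (let (n, E) = G in
     (\<forall>u v. E u v \<longrightarrow> u < n \<and> v < n) \<and>
     (\<forall>u v. E u v \<longrightarrow> E v u) \<and> (\<forall>u. \<not> E u u))"

definition degree :: "graph \<Rightarrow> nat \<Rightarrow> nat" where
  "degree G u = card {v \<in> {0..<fst G}. snd G u v}"

definition A_alpha :: "real \<Rightarrow> graph \<Rightarrow> nat \<Rightarrow> nat \<Rightarrow> real" where
  "A_alpha \<alpha> G i j =
     (if i = j then \<alpha> * real (degree G i) else 0) +
     (1 - \<alpha>) * (if snd G i j then 1 else 0)"

definition is_eigenvalue_alpha :: "real \<Rightarrow> graph \<Rightarrow> real \<Rightarrow> bool" where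
  "is_eigenvalue_alpha \<alpha> G \<mu> \<longleftrightarrow>
     (\<exists>x :: nat \<Rightarrow> real. (\<exists>i < fst G. x i \<noteq> 0) \<and>
        (\<forall>i < fst G. (\<Sum>j<fst G. A_alpha \<alpha> G i j * x j) = \<mu> * x i))"

definition lambda_alpha :: "real \<Rightarrow> graph \<Rightarrow> real" where
  "lambda_alpha \<alpha> G = Max {\<mu>. is_eigenvalue_alpha \<alpha> G \<mu>}"

definition family_n :: "graph set \<Rightarrow> nat \<Rightarrow> graph set" where
  "family_n \<G> n = {G \<in> \<G>. fst G = n}"

definition lambda_alpha_fam :: "real \<Rightarrow> graph set \<Rightarrow> nat \<Rightarrow> real" where
  "lambda_alpha_fam \<alpha> \<G> n = Max (lambda_alpha \<alpha> ` family_n \<G> n)"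

text \<open>Induced subgraph of G on an injective image f({0..<m}), relabelled to {0..<m}.
Taking m = n and f a bijection this also covers isomorphic copies.\<close>
definition induced_sub :: "graph \<Rightarrow> nat \<Rightarrow> (nat \<Rightarrow> nat) \<Rightarrow> graph" where
  "induced_sub G m f = (m, \<lambda>i j. i < m \<and> j < m \<and> snd G (f i) (f j))"

definition hereditary :: "graph set \<Rightarrow> bool" where
  "hereditary \<G> \<longleftrightarrow> (\<forall>G \<in> \<G>. \<forall>m f. inj_on f {0..<m} \<and> f ` {0..<m} \<subseteq> {0..<fst G}
      \<longrightarrow> induced_sub G m f \<in> \<G>)"

definition blowup :: "graph \<Rightarrow> nat \<Rightarrow> graph" where
  "blowup G p = (fst G * p,
     \<lambda>u v. u < fst G * p \<and> v < fst G * p \<and> snd G (u div p) (v div p))"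

definition multiplicative :: "graph set \<Rightarrow> bool" where
  "multiplicative \<G> \<longleftrightarrow> (\<forall>G \<in> \<G>. \<forall>p \<ge> 1. blowup G p \<in> \<G>)"

end

theory Submission
  imports Defs "HOL-Analysis.Function_Topology" "Jordan_Normal_Form.Char_Poly"
begin

text \<open>Let F(n) be the largest \<lambda>_\<alpha> over the n-vertex members of \<G>, attained by G with
  eigenvector x. The n induced subgraphs G - v lie in \<G> by heredity; summing the Rayleigh
  bound for them counts every edge of G n - 2 times and every x_v^2 n - 1 times, so
  (n - 2) F(n) \<le> (n - 1) F(n - 1). Hence F(n)/(n - 1) decreases and F(n)/n converges.
  Lifting x to the blow-up G^p shows \<lambda>_\<alpha>(G^p) \<ge> p \<lambda>_\<alpha>(G), so by multiplicativity
  \<lambda>_\<alpha>(G)/n \<le> F(pn)/(pn) for every p, and the limit is an upper bound.\<close>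

definition quad_form :: "(nat \<Rightarrow> nat \<Rightarrow> real) \<Rightarrow> nat \<Rightarrow> (nat \<Rightarrow> real) \<Rightarrow> real" where
  "quad_form A n x = (\<Sum>i<n. \<Sum>j<n. A i j * x i * x j)"

definition sq_norm :: "nat \<Rightarrow> (nat \<Rightarrow> real) \<Rightarrow> real" where
  "sq_norm n x = (\<Sum>i<n. (x i)\<^sup>2)"

lemma sq_norm_nonneg: "0 \<le> sq_norm n x"
  unfolding sq_norm_def by (simp add: sum_nonneg)

lemma sq_norm_pos_iff: "0 < sq_norm n x \<longleftrightarrow> (\<exists>i<n. x i \<noteq> 0)"
  unfolding sq_norm_def by (auto simp: less_le sum_nonneg sum_nonneg_eq_0_iff)

lemma quad_form_cong: "(\<And>i. i < n \<Longrightarrow> x i = y i) \<Longrightarrow> quad_form A n x = quad_form A n y"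
  unfolding quad_form_def by (intro sum.cong refl) auto

lemma quad_form_eq_0_if_sq_norm_eq_0:
  assumes "sq_norm n x = 0"
  shows "quad_form A n x = 0"
proof -
  have "quad_form A n x = quad_form A n (\<lambda>_. 0)"
    using assms sq_norm_pos_iff[of n x] by (intro quad_form_cong) auto
  then show ?thesis by (simp add: quad_form_def)
qed

lemma quad_form_scale: "quad_form A n (\<lambda>i. c * x i) = c\<^sup>2 * quad_form A n x"
  unfolding quad_form_def power2_eq_square by (simp add: sum_distrib_left algebra_simps)

lemma sq_norm_scale: "sq_norm n (\<lambda>i. c * x i) = c\<^sup>2 * sq_norm n x"
  unfolding sq_norm_def by (simp add: sum_distrib_left power_mult_distrib)

lemma continuous_on_quad_form: "continuous_on S (quad_form A n)"
  unfolding quad_form_def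
  by (intro continuous_intros continuous_on_subset[OF continuous_on_product_coordinates]) auto

lemma continuous_on_sq_norm: "continuous_on S (sq_norm n)"
  unfolding sq_norm_def
  by (intro continuous_intros continuous_on_subset[OF continuous_on_product_coordinates]) auto

lemma quad_form_eigenvector:
  assumes "\<forall>i<n. (\<Sum>j<n. A i j * x j) = \<mu> * x i"
  shows "quad_form A n x = \<mu> * sq_norm n x"
proof -
  have "quad_form A n x = (\<Sum>i<n. x i * (\<Sum>j<n. A i j * x j))"
    unfolding quad_form_def by (simp add: sum_distrib_left algebra_simps)
  also have "\<dots> = (\<Sum>i<n. \<mu> * (x i)\<^sup>2)"
    using assms by (intro sum.cong) (auto simp: power2_eq_square)
  finally show ?thesis by (simp add: sq_norm_def sum_distrib_left)
qed

lemma eigenvalue_le_if_quad_form_bound: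
  assumes "\<forall>i<n. (\<Sum>j<n. A i j * x j) = \<nu> * x i" and "\<exists>i<n. x i \<noteq> 0"
    and "\<And>y. quad_form A n y \<le> \<mu> * sq_norm n y"
  shows "\<nu> \<le> \<mu>"
  using assms(3)[of x] quad_form_eigenvector[OF assms(1)] assms(2)
  by (simp add: sq_norm_pos_iff[symmetric])

lemma sum_mult_indicator_at:
  fixes f :: "nat \<Rightarrow> real"
  shows "k < n \<Longrightarrow> (\<Sum>j<n. f j * of_bool (j = k)) = f k"
  by (simp add: of_bool_def if_distrib[of "(*) _"] cong: if_cong)

lemma quad_form_unit_vector: "k < n \<Longrightarrow> quad_form A n (\<lambda>i. of_bool (i = k)) = A k k"
  unfolding quad_form_def by (simp only: sum_mult_indicator_at)

lemma sq_norm_unit_vector: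
  assumes "k < n"
  shows "sq_norm n (\<lambda>i. of_bool (i = k)) = 1"
proof -
  have "sq_norm n (\<lambda>i. of_bool (i = k)) = (\<Sum>i<n. 1 * of_bool (i = k))"
    unfolding sq_norm_def by (intro sum.cong) (auto simp: of_bool_def)
  then show ?thesis using sum_mult_indicator_at[OF assms, of "\<lambda>_. 1"] by simp
qed

lemma quad_form_add_unit:
  assumes sym: "\<And>i j. i < n \<Longrightarrow> j < n \<Longrightarrow> A i j = A j i" and k: "k < n"
  shows "quad_form A n (\<lambda>i. x i + t * of_bool (i = k))
    = quad_form A n x + 2 * t * (\<Sum>j<n. A k j * x j) + t\<^sup>2 * A k k"
proof -
  let ?e = "\<lambda>i. of_bool (i = k) :: real"
  have "quad_form A n (\<lambda>i. x i + t * ?e i) = quad_form A n x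
      + t * (\<Sum>i<n. \<Sum>j<n. A i j * x i * ?e j) + t * (\<Sum>i<n. \<Sum>j<n. A i j * x j * ?e i)
      + t\<^sup>2 * (\<Sum>i<n. \<Sum>j<n. A i j * ?e i * ?e j)"
    unfolding quad_form_def by (simp add: algebra_simps sum.distrib sum_distrib_left power2_eq_square)
  also have "(\<Sum>i<n. \<Sum>j<n. A i j * x i * ?e j) = (\<Sum>j<n. A k j * x j)"
    using k sym by (simp add: sum_mult_indicator_at)
  also have "(\<Sum>i<n. \<Sum>j<n. A i j * x j * ?e i) = (\<Sum>j<n. A k j * x j)"
    using k by (subst sum.swap) (simp add: sum_mult_indicator_at)
  also have "(\<Sum>i<n. \<Sum>j<n. A i j * ?e i * ?e j) = A k k"
    using quad_form_unit_vector[OF k] by (simp add: quad_form_def)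
  finally show ?thesis by simp
qed

lemma sq_norm_add_unit:
  assumes "k < n"
  shows "sq_norm n (\<lambda>i. x i + t * of_bool (i = k)) = sq_norm n x + 2 * t * x k + t\<^sup>2"
proof -
  have "(x i + t * of_bool (i = k))\<^sup>2 = (x i)\<^sup>2 + (2 * t * x i + t\<^sup>2) * of_bool (i = k)" for i
    by (simp add: power2_sum algebra_simps)
  then show ?thesis
    using assms unfolding sq_norm_def by (simp add: sum.distrib sum_mult_indicator_at)
qed

lemma linear_coeff_eq_0_if_quadratic_nonpos:
  fixes c d :: real
  assumes "\<And>t. 2 * t * c + t\<^sup>2 * d \<le> 0"
  shows "c = 0"
proof -
  define s where "s = 1 / (\<bar>d\<bar> + 1)"
  have "0 < s" "s * \<bar>d\<bar> < 1" unfolding s_def by (auto simp: field_simps)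
  moreover have "s * (- d) \<le> s * \<bar>d\<bar>"
    using \<open>0 < s\<close> by (intro mult_left_mono) auto
  ultimately have "0 < 2 + s * d" by simp
  moreover have "s * c\<^sup>2 * (2 + s * d) \<le> 0"
    using assms[of "s * c"] by (simp add: algebra_simps power2_eq_square)
  ultimately show "c = 0" using \<open>0 < s\<close> by (simp add: mult_le_0_iff zero_less_mult_iff)
qed

text \<open>Vectors are functions nat \<Rightarrow> real with the product topology; coordinates beyond n are
  pinned to 0, which makes the unit sphere compact.\<close>
lemma quad_form_max_on_sphere:
  assumes "1 \<le> n"
  obtains x where "sq_norm n x = 1" and "\<And>y. quad_form A n y \<le> quad_form A n x * sq_norm n y"
proof -
  define box where "box = PiE UNIV (\<lambda>i::nat. if i < n then {-1..1::real} else {0})"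
  define K where "K = box \<inter> {x. sq_norm n x = 1}"
  have "compactin (product_topology (\<lambda>_. euclidean) UNIV) box"
    unfolding box_def compactin_PiE by (auto simp: compactin_euclidean_iff)
  then have "compact box" by (simp add: euclidean_product_topology compactin_euclidean_iff)
  moreover have "closed {x. sq_norm n x = 1}"
    by (intro closed_Collect_eq continuous_on_sq_norm continuous_on_const)
  ultimately have "compact K" unfolding K_def by (rule compact_Int_closed)
  have "(\<lambda>i. of_bool (i = 0)) \<in> K"
    using assms sq_norm_unit_vector[of 0 n] by (auto simp: K_def box_def PiE_iff)
  then obtain x where "x \<in> K" and x_max: "\<And>z. z \<in> K \<Longrightarrow> quad_form A n z \<le> quad_form A n x"
    using continuous_attains_sup[OF \<open>compact K\<close> _ continuous_on_quad_form] by blast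
  have "quad_form A n y \<le> quad_form A n x * sq_norm n y" for y
  proof (cases "sq_norm n y = 0")
    case True
    then show ?thesis by (simp add: quad_form_eq_0_if_sq_norm_eq_0)
  next
    case False
    then have pos: "0 < sq_norm n y" using sq_norm_nonneg[of n y] by simp
    define s where "s = sqrt (sq_norm n y)"
    have s: "0 < s" "s\<^sup>2 = sq_norm n y" using pos unfolding s_def by auto
    define z where "z = (\<lambda>i. if i < n then y i / s else 0)"
    have "sq_norm n z = sq_norm n (\<lambda>i. (1 / s) * y i)" "quad_form A n z = quad_form A n (\<lambda>i. (1 / s) * y i)"
      unfolding sq_norm_def z_def by (auto intro: quad_form_cong)
    then have z_norm: "sq_norm n z = 1" and z_quad: "quad_form A n z = quad_form A n y / s\<^sup>2"
      unfolding sq_norm_scale quad_form_scale using s by (auto simp: power_divide)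
    have "z i \<in> (if i < n then {-1..1} else {0})" for i
    proof (cases "i < n")
      case True
      have "(y i)\<^sup>2 \<le> sq_norm n y" unfolding sq_norm_def using True by (intro member_le_sum) auto
      then have "\<bar>y i\<bar> \<le> s" unfolding s_def by (simp add: real_le_rsqrt)
      then have "\<bar>z i\<bar> \<le> 1" using True s by (simp add: z_def abs_divide divide_le_eq_1)
      then show ?thesis using True abs_le_D1[of "z i"] abs_le_D2[of "z i"] by auto
    qed (simp add: z_def)
    then have "z \<in> K" using z_norm by (simp add: K_def box_def PiE_iff)
    then have "quad_form A n y / s\<^sup>2 \<le> quad_form A n x" using x_max[OF \<open>z \<in> K\<close>] z_quad by simp
    then show ?thesis using pos by (simp add: s(2) pos_divide_le_eq mult.commute)
  qed
  moreover have "sq_norm n x = 1" using \<open>x \<in> K\<close> by (simp add: K_def)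
  ultimately show thesis using that by blast
qed

text \<open>Along x + t e_k the bound q(y) \<le> \<mu> |y|^2 reads 2t((A x)_k - \<mu> x_k) + t^2 (A_kk - \<mu>) \<le> 0
  for all t, which forces (A x)_k = \<mu> x_k.\<close>
lemma rayleigh_maximiser_is_eigenvector:
  assumes sym: "\<And>i j. i < n \<Longrightarrow> j < n \<Longrightarrow> A i j = A j i"
    and unit: "sq_norm n x = 1"
    and max: "\<And>y. quad_form A n y \<le> quad_form A n x * sq_norm n y"
  shows "\<forall>k<n. (\<Sum>j<n. A k j * x j) = quad_form A n x * x k"
proof (intro allI impI)
  fix k assume k: "k < n"
  let ?\<mu> = "quad_form A n x"
  have "2 * t * ((\<Sum>j<n. A k j * x j) - ?\<mu> * x k) + t\<^sup>2 * (A k k - ?\<mu>) \<le> 0" for t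
    using max[of "\<lambda>i. x i + t * of_bool (i = k)"]
      quad_form_add_unit[OF sym k, where x = x and t = t] sq_norm_add_unit[OF k, where x = x and t = t] unit
    by (simp add: algebra_simps)
  then have "(\<Sum>j<n. A k j * x j) - ?\<mu> * x k = 0"
    by (rule linear_coeff_eq_0_if_quadratic_nonpos)
  then show "(\<Sum>j<n. A k j * x j) = ?\<mu> * x k" by simp
qed

lemma A_alpha_sym: "is_graph G \<Longrightarrow> A_alpha \<alpha> G i j = A_alpha \<alpha> G j i"
  unfolding A_alpha_def is_graph_def by (cases G) auto

lemma degree_eq_sum: "real (Defs.degree G i) = (\<Sum>j<fst G. if snd G i j then 1 else 0)"
proof -
  have "real (Defs.degree G i) = (\<Sum>j\<in>{j \<in> {..<fst G}. snd G i j}. 1)"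
    unfolding Defs.degree_def by (simp add: atLeast0LessThan)
  also have "\<dots> = (\<Sum>j<fst G. if snd G i j then 1 else 0)"
    by (rule sum.inter_filter) simp
  finally show ?thesis .
qed

lemma sum_A_alpha_row:
  assumes "i < fst G"
  shows "(\<Sum>j<fst G. A_alpha \<alpha> G i j * x j) =
    \<alpha> * real (Defs.degree G i) * x i + (1 - \<alpha>) * (\<Sum>j<fst G. if snd G i j then x j else 0)"
proof -
  have "A_alpha \<alpha> G i j * x j = (if j = i then \<alpha> * real (Defs.degree G i) * x i else 0)
     + (1 - \<alpha>) * (if snd G i j then x j else 0)" for j
    unfolding A_alpha_def by (auto simp: algebra_simps)
  then show ?thesis using assms by (simp add: sum.distrib sum_distrib_left)
qed

definition edge_form :: "real \<Rightarrow> graph \<Rightarrow> (nat \<Rightarrow> real) \<Rightarrow> nat \<Rightarrow> nat \<Rightarrow> real" where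
  "edge_form \<alpha> G x i j = (if snd G i j then \<alpha> * (x i)\<^sup>2 + (1 - \<alpha>) * x i * x j else 0)"

lemma quad_form_A_alpha:
  "quad_form (A_alpha \<alpha> G) (fst G) x = (\<Sum>i<fst G. \<Sum>j<fst G. edge_form \<alpha> G x i j)"
proof -
  have "quad_form (A_alpha \<alpha> G) (fst G) x = (\<Sum>i<fst G. x i * (\<Sum>j<fst G. A_alpha \<alpha> G i j * x j))"
    unfolding quad_form_def by (simp add: sum_distrib_left algebra_simps)
  also have "\<dots> = (\<Sum>i<fst G. \<Sum>j<fst G. edge_form \<alpha> G x i j)"
  proof (intro sum.cong refl)
    fix i assume "i \<in> {..<fst G}"
    then have i: "i < fst G" by simp
    have "(\<Sum>j<fst G. edge_form \<alpha> G x i j)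
       = (\<Sum>j<fst G. \<alpha> * (x i)\<^sup>2 * (if snd G i j then 1 else 0) + (1 - \<alpha>) * x i * (if snd G i j then x j else 0))"
      unfolding edge_form_def by (intro sum.cong) auto
    also have "\<dots> = \<alpha> * (x i)\<^sup>2 * real (Defs.degree G i) + (1 - \<alpha>) * x i * (\<Sum>j<fst G. if snd G i j then x j else 0)"
      by (simp add: sum.distrib degree_eq_sum sum_distrib_left)
    finally show "x i * (\<Sum>j<fst G. A_alpha \<alpha> G i j * x j) = (\<Sum>j<fst G. edge_form \<alpha> G x i j)"
      unfolding sum_A_alpha_row[OF i] by (simp add: algebra_simps power2_eq_square)
  qed
  finally show ?thesis .
qed

lemma eigenvalue_alpha_finite: "finite {\<mu>. is_eigenvalue_alpha \<alpha> G \<mu>}"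
proof -
  define n where "n = fst G"
  define M :: "real mat" where "M = mat n n (\<lambda>(i, j). A_alpha \<alpha> G i j)"
  have M: "M \<in> carrier_mat n n" by (simp add: M_def)
  have "{\<mu>. is_eigenvalue_alpha \<alpha> G \<mu>} \<subseteq> {\<mu>. poly (char_poly M) \<mu> = 0}"
  proof
    fix \<mu> assume "\<mu> \<in> {\<mu>. is_eigenvalue_alpha \<alpha> G \<mu>}"
    then obtain x where x0: "\<exists>i<n. x i \<noteq> 0" and ev: "\<forall>i<n. (\<Sum>j<n. A_alpha \<alpha> G i j * x j) = \<mu> * x i"
      unfolding is_eigenvalue_alpha_def n_def by auto
    have "eigenvector M (vec n x) \<mu>" unfolding eigenvector_def
    proof (intro conjI)
      show "vec n x \<in> carrier_vec (dim_row M)" "vec n x \<noteq> 0\<^sub>v (dim_row M)"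
        using x0 M by (auto simp: vec_eq_iff)
      show "M *\<^sub>v vec n x = \<mu> \<cdot>\<^sub>v vec n x"
        using ev M by (intro eq_vecI) (auto simp: M_def mult_mat_vec_def scalar_prod_def lessThan_atLeast0)
    qed
    then show "\<mu> \<in> {\<mu>. poly (char_poly M) \<mu> = 0}"
      using eigenvalue_root_char_poly[OF M] unfolding eigenvalue_def by blast
  qed
  moreover have "char_poly M \<noteq> 0" using degree_monic_char_poly[OF M] by auto
  ultimately show ?thesis using poly_roots_finite finite_subset by blast
qed

lemma eigenvalue_le_lambda_alpha: "is_eigenvalue_alpha \<alpha> G \<nu> \<Longrightarrow> \<nu> \<le> lambda_alpha \<alpha> G"
  unfolding lambda_alpha_def using eigenvalue_alpha_finite by (intro Max_ge) auto

lemma lambda_alpha_rayleigh: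
  assumes G: "is_graph G" and n: "1 \<le> fst G"
  shows "is_eigenvalue_alpha \<alpha> G (lambda_alpha \<alpha> G)"
    and "quad_form (A_alpha \<alpha> G) (fst G) y \<le> lambda_alpha \<alpha> G * sq_norm (fst G) y"
proof -
  let ?A = "A_alpha \<alpha> G" and ?n = "fst G"
  obtain x where unit: "sq_norm ?n x = 1"
    and max: "\<And>y. quad_form ?A ?n y \<le> quad_form ?A ?n x * sq_norm ?n y"
    using quad_form_max_on_sphere[OF n] by blast
  define \<mu> where "\<mu> = quad_form ?A ?n x"
  have eig: "is_eigenvalue_alpha \<alpha> G \<mu>"
    using rayleigh_maximiser_is_eigenvector[OF A_alpha_sym[OF G] unit max] unit sq_norm_pos_iff[of ?n x]
    unfolding is_eigenvalue_alpha_def \<mu>_def by auto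
  have "\<nu> \<le> \<mu>" if \<nu>: "is_eigenvalue_alpha \<alpha> G \<nu>" for \<nu>
  proof -
    obtain z where "\<forall>i<?n. (\<Sum>j<?n. ?A i j * z j) = \<nu> * z i" "\<exists>i<?n. z i \<noteq> 0"
      using \<nu> unfolding is_eigenvalue_alpha_def by blast
    then show ?thesis using max unfolding \<mu>_def by (rule eigenvalue_le_if_quad_form_bound)
  qed
  then have "lambda_alpha \<alpha> G = \<mu>"
    unfolding lambda_alpha_def using eig eigenvalue_alpha_finite by (intro Max_eqI) auto
  then show "is_eigenvalue_alpha \<alpha> G (lambda_alpha \<alpha> G)"
    and "quad_form ?A ?n y \<le> lambda_alpha \<alpha> G * sq_norm ?n y"
    using eig max unfolding \<mu>_def by auto
qed

lemma lambda_alpha_nonneg: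
  assumes G: "is_graph G" and n: "1 \<le> fst G" and "0 \<le> \<alpha>"
  shows "0 \<le> lambda_alpha \<alpha> G"
proof -
  have "0 \<le> A_alpha \<alpha> G 0 0"
    using G \<open>0 \<le> \<alpha>\<close> unfolding A_alpha_def is_graph_def by (cases G) auto
  also have "\<dots> = quad_form (A_alpha \<alpha> G) (fst G) (\<lambda>i. of_bool (i = 0))"
    using n by (simp add: quad_form_unit_vector)
  also have "\<dots> \<le> lambda_alpha \<alpha> G"
    using lambda_alpha_rayleigh(2)[OF G n, where \<alpha> = \<alpha> and y = "\<lambda>i. of_bool (i = 0)"]
      sq_norm_unit_vector[of 0 "fst G"] n by simp
  finally show ?thesis .
qed

lemma graphs_of_order_finite: "finite {G. is_graph G \<and> fst G = n}"
proof -
  have "{G. is_graph G \<and> fst G = n} \<subseteq> (\<lambda>S. (n, \<lambda>u v. (u, v) \<in> S)) ` Pow ({0..<n} \<times> {0..<n})"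
  proof
    fix G assume G: "G \<in> {G. is_graph G \<and> fst G = n}"
    obtain E where GE: "G = (n, E)" using G by (cases G) auto
    then have "\<And>u v. E u v \<Longrightarrow> u < n \<and> v < n" using G by (auto simp: is_graph_def)
    then have "{(u, v). E u v} \<in> Pow ({0..<n} \<times> {0..<n})" by auto
    then show "G \<in> (\<lambda>S. (n, \<lambda>u v. (u, v) \<in> S)) ` Pow ({0..<n} \<times> {0..<n})"
      using GE by (intro image_eqI[of _ _ "{(u, v). E u v}"]) auto
  qed
  then show ?thesis by (rule finite_subset) auto
qed

lemma family_n_finite: "\<forall>G \<in> \<G>. is_graph G \<Longrightarrow> finite (family_n \<G> n)"
  by (rule finite_subset[OF _ graphs_of_order_finite[of n]]) (auto simp: family_n_def)

lemma lambda_alpha_le_fam: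
  "\<forall>G \<in> \<G>. is_graph G \<Longrightarrow> G \<in> family_n \<G> n \<Longrightarrow> lambda_alpha \<alpha> G \<le> lambda_alpha_fam \<alpha> \<G> n"
  unfolding lambda_alpha_fam_def using family_n_finite by (intro Max_ge) auto

lemma lambda_alpha_fam_attained:
  assumes "\<forall>G \<in> \<G>. is_graph G" and "family_n \<G> n \<noteq> {}"
  obtains G where "G \<in> family_n \<G> n" and "lambda_alpha \<alpha> G = lambda_alpha_fam \<alpha> \<G> n"
proof -
  have "lambda_alpha_fam \<alpha> \<G> n \<in> lambda_alpha \<alpha> ` family_n \<G> n"
    unfolding lambda_alpha_fam_def using family_n_finite[OF assms(1)] assms(2) by (intro Max_in) auto
  then show thesis using that by force
qed

lemma lambda_alpha_fam_nonneg:
  assumes graphs: "\<forall>G \<in> \<G>. is_graph G" and "family_n \<G> n \<noteq> {}" and "1 \<le> n" and "0 \<le> \<alpha>"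
  shows "0 \<le> lambda_alpha_fam \<alpha> \<G> n"
proof -
  obtain G where G: "G \<in> family_n \<G> n" and "lambda_alpha \<alpha> G = lambda_alpha_fam \<alpha> \<G> n"
    using lambda_alpha_fam_attained[OF assms(1,2)] .
  moreover have "is_graph G" "fst G = n" using G graphs by (auto simp: family_n_def)
  ultimately show ?thesis using lambda_alpha_nonneg[of G \<alpha>] assms(3,4) by simp
qed

definition skip :: "nat \<Rightarrow> nat \<Rightarrow> nat" where
  "skip v i = (if i < v then i else Suc i)"

lemma inj_skip: "inj_on (skip v) A"
  unfolding inj_on_def skip_def by auto

lemma skip_image: "v < N \<Longrightarrow> skip v ` {..<N - 1} = {..<N} - {v}"
proof (intro equalityI subsetI)
  fix w assume "v < N" "w \<in> {..<N} - {v}"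
  then have "w = skip v (if w < v then w else w - 1)" "(if w < v then w else w - 1) < N - 1"
    by (auto simp: skip_def)
  then show "w \<in> skip v ` {..<N - 1}" by blast
qed (auto simp: skip_def)

lemma sum_skip:
  fixes h :: "nat \<Rightarrow> real"
  assumes "v < N"
  shows "(\<Sum>i<N - 1. h (skip v i)) = (\<Sum>i\<in>{..<N} - {v}. h i)"
  using sum.reindex[OF inj_skip, of h v "{..<N - 1}"] skip_image[OF assms] by simp

lemma sum_delete_each:
  fixes h :: "nat \<Rightarrow> real"
  shows "(\<Sum>v<N. \<Sum>i\<in>{..<N} - {v}. h i) = (real N - 1) * (\<Sum>i<N. h i)"
proof -
  have "(\<Sum>v<N. \<Sum>i\<in>{..<N} - {v}. h i) = (\<Sum>v<N. (\<Sum>i<N. h i) - h v)"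
    by (intro sum.cong refl) (simp add: sum_diff1)
  then show ?thesis by (simp add: sum_subtractf algebra_simps)
qed

lemma double_sum_delete_each:
  fixes g :: "nat \<Rightarrow> nat \<Rightarrow> real"
  assumes "\<And>v. g v v = 0"
  shows "(\<Sum>v<N. \<Sum>i\<in>{..<N} - {v}. \<Sum>j\<in>{..<N} - {v}. g i j) = (real N - 2) * (\<Sum>i<N. \<Sum>j<N. g i j)"
proof -
  have "(\<Sum>i\<in>{..<N} - {v}. \<Sum>j\<in>{..<N} - {v}. g i j)
      = (\<Sum>i<N. \<Sum>j<N. g i j) - (\<Sum>j<N. g v j) - (\<Sum>i<N. g i v)" if "v < N" for v
    using that assms by (simp add: sum_diff1 sum_subtractf)
  then have "(\<Sum>v<N. \<Sum>i\<in>{..<N} - {v}. \<Sum>j\<in>{..<N} - {v}. g i j)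
      = real N * (\<Sum>i<N. \<Sum>j<N. g i j) - (\<Sum>v<N. \<Sum>j<N. g v j) - (\<Sum>v<N. \<Sum>i<N. g i v)"
    by (simp add: sum_subtractf)
  also have "(\<Sum>v<N. \<Sum>i<N. g i v) = (\<Sum>i<N. \<Sum>j<N. g i j)" by (rule sum.swap)
  finally show ?thesis by (simp add: algebra_simps)
qed

lemma quad_form_induced_skip:
  assumes "v < N"
  shows "quad_form (A_alpha \<alpha> (induced_sub G (N - 1) (skip v))) (N - 1) (x \<circ> skip v)
    = (\<Sum>i\<in>{..<N} - {v}. \<Sum>j\<in>{..<N} - {v}. edge_form \<alpha> G x i j)"
proof -
  let ?H = "induced_sub G (N - 1) (skip v)"
  have "quad_form (A_alpha \<alpha> ?H) (N - 1) (x \<circ> skip v)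
      = (\<Sum>i<N - 1. \<Sum>j<N - 1. edge_form \<alpha> G x (skip v i) (skip v j))"
    using quad_form_A_alpha[of \<alpha> ?H] by (simp add: induced_sub_def edge_form_def o_def)
  also have "\<dots> = (\<Sum>i\<in>{..<N} - {v}. \<Sum>j<N - 1. edge_form \<alpha> G x i (skip v j))"
    by (rule sum_skip[OF assms])
  also have "\<dots> = (\<Sum>i\<in>{..<N} - {v}. \<Sum>j\<in>{..<N} - {v}. edge_form \<alpha> G x i j)"
    by (intro sum.cong refl sum_skip[OF assms])
  finally show ?thesis .
qed

lemma deleted_edge_form_le:
  assumes graphs: "\<forall>G \<in> \<G>. is_graph G" and her: "hereditary \<G>"
    and G: "G \<in> family_n \<G> N" and "2 \<le> N" "v < N"
  shows "(\<Sum>i\<in>{..<N} - {v}. \<Sum>j\<in>{..<N} - {v}. edge_form \<alpha> G x i j)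
    \<le> lambda_alpha_fam \<alpha> \<G> (N - 1) * (\<Sum>i\<in>{..<N} - {v}. (x i)\<^sup>2)"
proof -
  define H where "H = induced_sub G (N - 1) (skip v)"
  have "H \<in> family_n \<G> (N - 1)"
    using her G inj_skip skip_image[OF \<open>v < N\<close>]
    unfolding hereditary_def family_n_def H_def induced_sub_def
    by (auto simp: atLeast0LessThan)
  then have "is_graph H" "fst H = N - 1" using graphs by (auto simp: family_n_def)
  then have "quad_form (A_alpha \<alpha> H) (N - 1) (x \<circ> skip v) \<le> lambda_alpha \<alpha> H * sq_norm (N - 1) (x \<circ> skip v)"
    using lambda_alpha_rayleigh(2)[of H] \<open>2 \<le> N\<close> by simp
  also have "\<dots> \<le> lambda_alpha_fam \<alpha> \<G> (N - 1) * sq_norm (N - 1) (x \<circ> skip v)"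
    using lambda_alpha_le_fam[OF graphs \<open>H \<in> family_n \<G> (N - 1)\<close>]
    by (intro mult_right_mono sq_norm_nonneg)
  finally show ?thesis
    using quad_form_induced_skip sum_skip[of v N "\<lambda>i. (x i)\<^sup>2"] \<open>v < N\<close>
    unfolding sq_norm_def H_def by simp
qed

lemma lambda_alpha_fam_vertex_deletion:
  assumes graphs: "\<forall>G \<in> \<G>. is_graph G" and her: "hereditary \<G>"
    and "family_n \<G> N \<noteq> {}" and "2 \<le> N"
  shows "(real N - 2) * lambda_alpha_fam \<alpha> \<G> N \<le> (real N - 1) * lambda_alpha_fam \<alpha> \<G> (N - 1)"
proof -
  obtain G where G: "G \<in> family_n \<G> N" and G_max: "lambda_alpha \<alpha> G = lambda_alpha_fam \<alpha> \<G> N"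
    using lambda_alpha_fam_attained[OF graphs \<open>family_n \<G> N \<noteq> {}\<close>] .
  have "is_graph G" "fst G = N" using G graphs by (auto simp: family_n_def)
  define l where "l = lambda_alpha \<alpha> G"
  obtain x where x: "\<exists>i<N. x i \<noteq> 0" "\<forall>i<N. (\<Sum>j<N. A_alpha \<alpha> G i j * x j) = l * x i"
    using lambda_alpha_rayleigh(1)[OF \<open>is_graph G\<close>, where \<alpha> = \<alpha>] \<open>fst G = N\<close> \<open>2 \<le> N\<close>
    unfolding is_eigenvalue_alpha_def l_def by auto
  define S where "S = sq_norm N x"
  have "0 < S" using x(1) sq_norm_pos_iff unfolding S_def by blast
  have "(\<Sum>i<N. \<Sum>j<N. edge_form \<alpha> G x i j) = l * S"
    using quad_form_A_alpha[of \<alpha> G x] quad_form_eigenvector[OF x(2)] \<open>fst G = N\<close> S_def by simp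
  moreover have "edge_form \<alpha> G x v v = 0" for v
    using \<open>is_graph G\<close> by (cases G) (auto simp: edge_form_def is_graph_def)
  then have "(\<Sum>v<N. \<Sum>i\<in>{..<N} - {v}. \<Sum>j\<in>{..<N} - {v}. edge_form \<alpha> G x i j)
      = (real N - 2) * (\<Sum>i<N. \<Sum>j<N. edge_form \<alpha> G x i j)"
    by (rule double_sum_delete_each)
  ultimately have "(real N - 2) * (l * S)
      = (\<Sum>v<N. \<Sum>i\<in>{..<N} - {v}. \<Sum>j\<in>{..<N} - {v}. edge_form \<alpha> G x i j)"
    by simp
  also have "\<dots> \<le> (\<Sum>v<N. lambda_alpha_fam \<alpha> \<G> (N - 1) * (\<Sum>i\<in>{..<N} - {v}. (x i)\<^sup>2))"
    using deleted_edge_form_le[OF graphs her G \<open>2 \<le> N\<close>] by (intro sum_mono) simp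
  also have "\<dots> = ((real N - 1) * lambda_alpha_fam \<alpha> \<G> (N - 1)) * S"
    by (simp add: sum_distrib_left[symmetric] sum_delete_each S_def sq_norm_def)
  finally show ?thesis using \<open>0 < S\<close> G_max l_def by (simp add: mult.assoc[symmetric])
qed

lemma sum_div_blowup:
  fixes h :: "nat \<Rightarrow> real"
  shows "(\<Sum>u<n * p. h (u div p)) = real p * (\<Sum>j<n. h j)"
proof (cases "p = 0")
  case False
  have "(\<Sum>u\<in>{m * p..<m * p + p}. h (u div p)) = real p * h m" for m
  proof -
    have "u div p = m" if "u \<in> {m * p..<m * p + p}" for u
      using that by (intro div_nat_eqI) (simp_all add: mult.commute)
    then show ?thesis by simp
  qed
  then show ?thesis
    using sum.nat_group[of "\<lambda>u. h (u div p)" p n] by (simp add: sum_distrib_left)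
qed auto

lemma sum_A_alpha_blowup_row:
  assumes u: "u < fst G * p"
  shows "(\<Sum>v<fst G * p. A_alpha \<alpha> (blowup G p) u v * x (v div p))
    = real p * (\<Sum>j<fst G. A_alpha \<alpha> G (u div p) j * x j)"
proof -
  define B k where "B = blowup G p" and "k = u div p"
  have k: "k < fst G" using u unfolding k_def by (simp add: less_mult_imp_div_less)
  have B: "fst B = fst G * p" "snd B u v = (v < fst G * p \<and> snd G k (v div p))" for v
    using u by (auto simp: B_def k_def blowup_def)
  have "real (Defs.degree B u) = (\<Sum>v<fst G * p. if snd G k (v div p) then 1 else 0)"
    unfolding degree_eq_sum B by (intro sum.cong) auto
  then have deg: "real (Defs.degree B u) = real p * real (Defs.degree G k)"
    using sum_div_blowup[of "\<lambda>j. if snd G k j then 1 else 0"] by (simp add: degree_eq_sum)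
  have "(\<Sum>v<fst G * p. if snd B u v then x (v div p) else 0)
      = (\<Sum>v<fst G * p. if snd G k (v div p) then x (v div p) else 0)"
    unfolding B by (intro sum.cong) auto
  then have nbrs: "(\<Sum>v<fst G * p. if snd B u v then x (v div p) else 0)
      = real p * (\<Sum>j<fst G. if snd G k j then x j else 0)"
    using sum_div_blowup[of "\<lambda>j. if snd G k j then x j else 0"] by simp
  have "(\<Sum>v<fst G * p. A_alpha \<alpha> B u v * x (v div p))
      = \<alpha> * real (Defs.degree B u) * x k + (1 - \<alpha>) * (\<Sum>v<fst G * p. if snd B u v then x (v div p) else 0)"
    using sum_A_alpha_row[of u B \<alpha> "\<lambda>v. x (v div p)"] u B(1) by (simp add: k_def)
  also have "\<dots> = real p * (\<alpha> * real (Defs.degree G k) * x k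
      + (1 - \<alpha>) * (\<Sum>j<fst G. if snd G k j then x j else 0))"
    unfolding deg nbrs by (simp add: algebra_simps)
  also have "\<dots> = real p * (\<Sum>j<fst G. A_alpha \<alpha> G k j * x j)"
    using sum_A_alpha_row[OF k] by simp
  finally show ?thesis unfolding B_def k_def .
qed

lemma blowup_eigenvalue:
  assumes "is_eigenvalue_alpha \<alpha> G \<mu>" and "1 \<le> p"
  shows "is_eigenvalue_alpha \<alpha> (blowup G p) (real p * \<mu>)"
proof -
  obtain x i where "i < fst G" "x i \<noteq> 0"
    and ev: "\<forall>i<fst G. (\<Sum>j<fst G. A_alpha \<alpha> G i j * x j) = \<mu> * x i"
    using assms(1) unfolding is_eigenvalue_alpha_def by auto
  then have "i * p < fst G * p" "x ((i * p) div p) \<noteq> 0" using \<open>1 \<le> p\<close> by auto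
  moreover have "(\<Sum>v<fst G * p. A_alpha \<alpha> (blowup G p) u v * x (v div p)) = real p * \<mu> * x (u div p)"
    if "u < fst G * p" for u
    using that ev sum_A_alpha_blowup_row[OF that] by (simp add: less_mult_imp_div_less)
  moreover have "fst (blowup G p) = fst G * p" by (simp add: blowup_def)
  ultimately show ?thesis
    unfolding is_eigenvalue_alpha_def by (intro exI[of _ "\<lambda>u. x (u div p)"] conjI exI[of _ "i * p"]) auto
qed

lemma lambda_alpha_div_le_blowup_fam:
  assumes graphs: "\<forall>G \<in> \<G>. is_graph G" and mult: "multiplicative \<G>"
    and G: "G \<in> family_n \<G> n" and n: "1 \<le> n" and p: "1 \<le> p"
  shows "lambda_alpha \<alpha> G / real n \<le> lambda_alpha_fam \<alpha> \<G> (n * p) / real (n * p)"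
proof -
  have "is_graph G" "fst G = n" using G graphs by (auto simp: family_n_def)
  have "blowup G p \<in> \<G>" using mult G p unfolding multiplicative_def family_n_def by blast
  moreover have "fst (blowup G p) = n * p" using \<open>fst G = n\<close> by (simp add: blowup_def)
  ultimately have B: "blowup G p \<in> family_n \<G> (n * p)" by (simp add: family_n_def)
  have "is_eigenvalue_alpha \<alpha> G (lambda_alpha \<alpha> G)"
    using lambda_alpha_rayleigh(1)[OF \<open>is_graph G\<close>] \<open>fst G = n\<close> n by simp
  then have "real p * lambda_alpha \<alpha> G \<le> lambda_alpha \<alpha> (blowup G p)"
    by (rule eigenvalue_le_lambda_alpha[OF blowup_eigenvalue[OF _ p]])
  also have "\<dots> \<le> lambda_alpha_fam \<alpha> \<G> (n * p)"
    by (rule lambda_alpha_le_fam[OF graphs B])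
  finally have "real p * lambda_alpha \<alpha> G / (real p * real n) \<le> lambda_alpha_fam \<alpha> \<G> (n * p) / (real p * real n)"
    by (rule divide_right_mono) simp
  then show ?thesis using p by (simp add: mult.commute)
qed

lemma convergent_div_of_nat_if_decreasing_ratio:
  fixes f :: "nat \<Rightarrow> real"
  assumes step: "\<And>n. 2 \<le> n \<Longrightarrow> (real n - 2) * f n \<le> (real n - 1) * f (n - 1)"
    and nonneg: "\<And>n. 1 \<le> n \<Longrightarrow> 0 \<le> f n"
  shows "convergent (\<lambda>n. f n / real n)"
proof -
  define b where "b k = f (k + 2) / (real k + 1)" for k
  have "decseq b"
  proof (rule decseq_SucI)
    fix k
    have "(real k + 1) * f (Suc (Suc (Suc k))) \<le> (real k + 2) * f (Suc (Suc k))"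
      using step[of "Suc (Suc (Suc k))"] by (simp add: algebra_simps)
    then show "b (Suc k) \<le> b k" by (simp add: b_def field_simps)
  qed
  moreover have "\<forall>k. 0 \<le> b k" using nonneg by (simp add: b_def)
  ultimately obtain L where "b \<longlonglongrightarrow> L" by (rule decseq_convergent)
  moreover have "(\<lambda>k. real (Suc k) / real (Suc (Suc k))) \<longlonglongrightarrow> 1"
    using LIMSEQ_Suc[OF LIMSEQ_n_over_Suc_n] by simp
  ultimately have "(\<lambda>k. b k * (real (Suc k) / real (Suc (Suc k)))) \<longlonglongrightarrow> L * 1"
    by (rule tendsto_mult)
  moreover have "b k * (real (Suc k) / real (Suc (Suc k))) = f (k + 2) / real (k + 2)" for k
    by (simp add: b_def add.commute)
  ultimately have "(\<lambda>k. f (k + 2) / real (k + 2)) \<longlonglongrightarrow> L" by simp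
  then show ?thesis by (rule convergentI[OF LIMSEQ_offset[where k = 2]])
qed

lemma LIMSEQ_le_of_le_at_multiples:
  fixes X :: "nat \<Rightarrow> real"
  assumes "X \<longlonglongrightarrow> L" and "1 \<le> n" and "\<And>p. 1 \<le> p \<Longrightarrow> c \<le> X (n * p)"
  shows "c \<le> L"
proof -
  have "strict_mono (\<lambda>p. n * (p + 1))" using assms(2) by (intro strict_monoI) simp
  then have "(X \<circ> (\<lambda>p. n * (p + 1))) \<longlonglongrightarrow> L" by (rule LIMSEQ_subseq_LIMSEQ[OF assms(1)])
  moreover have "c \<le> (X \<circ> (\<lambda>p. n * (p + 1))) p" for p
    using assms(3)[of "p + 1"] by simp
  then have "\<exists>N. \<forall>p\<ge>N. c \<le> (X \<circ> (\<lambda>p. n * (p + 1))) p" by blast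
  ultimately show ?thesis by (rule LIMSEQ_le_const)
qed

theorem lemma5p7:
  fixes \<G> :: "graph set" and r :: nat and \<alpha> :: real
  assumes graphs: "\<forall>G \<in> \<G>. is_graph G"
    and her: "hereditary \<G>"
    and mult: "multiplicative \<G>"
    and nonempty: "\<forall>n. family_n \<G> n \<noteq> {}"
    and r: "r \<ge> 2"
    and alpha: "0 \<le> \<alpha>" "\<alpha> \<le> 1 - 1 / real r"
    and large: "\<forall>\<^sub>F n in sequentially.
        lambda_alpha_fam \<alpha> \<G> n > (1 - 1 / real r) * real n - (1 - 1 / real r)"
  shows "convergent (\<lambda>n. lambda_alpha_fam \<alpha> \<G> n / real n) \<and>
    (\<forall>n \<ge> 1. \<forall>G \<in> family_n \<G> n.
       lambda_alpha \<alpha> G \<le> lim (\<lambda>n. lambda_alpha_fam \<alpha> \<G> n / real n) * real n)"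
proof -
  define F where "F = lambda_alpha_fam \<alpha> \<G>"
  have conv: "convergent (\<lambda>n. F n / real n)"
    using lambda_alpha_fam_vertex_deletion[OF graphs her nonempty[rule_format]]
      lambda_alpha_fam_nonneg[OF graphs nonempty[rule_format] _ alpha(1)]
    unfolding F_def by (rule convergent_div_of_nat_if_decreasing_ratio)
  then have lim: "(\<lambda>n. F n / real n) \<longlonglongrightarrow> lim (\<lambda>n. F n / real n)"
    by (simp add: convergent_LIMSEQ_iff)
  have "lambda_alpha \<alpha> G \<le> lim (\<lambda>n. F n / real n) * real n"
    if n: "1 \<le> n" and G: "G \<in> family_n \<G> n" for n G
  proof -
    have "lambda_alpha \<alpha> G / real n \<le> lim (\<lambda>n. F n / real n)"
      using LIMSEQ_le_of_le_at_multiples[OF lim n] lambda_alpha_div_le_blowup_fam[OF graphs mult G n]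
      unfolding F_def by blast
    then show ?thesis using n by (simp add: divide_le_eq)
  qed
  with conv show ?thesis by (simp add: F_def)
qed

end
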